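(* Let $X$ be a countably infinite set. Let $\sigma$ be the map from the lattice $\mathrm{Cl}_{loc}(X)$ of local clones on $X$ into the lattice of partial clones of finite operations on $X$ which sends each local clone $\mathscr C$ to the set of all restrictions of operations of $\mathscr C$ to finite domains (i.e. all $f|_A$ with $f\in\mathscr C$ $n$-ary and $A\subseteq X^n$ finite). Then $\sigma$ is one-to-one and preserves arbitrary joins.
   Context: A clone on $X$ is a set of finitary operations $X^n\to X$ ($n\ge1$) containing all projections $\pi^n_k(x_1,\dots,x_n)=x_k$ and closed under composition. Giving $X$ the discrete topology and $X^{X^n}$ the product topology, a clone is local if for each $n$ its set of $n$-ary operations is closed in $X^{X^n}$; equivalently, an $n$-ary operation $g$ belongs to the clone whenever for every finite $B\subseteq X^n$ some $n$-ary operation of the clone agrees with $g$ on $B$. $\mathrm{Cl}_{loc}(X)$ is the complete lattice of local clones ordered by inclusion (join = smallest local clone containing the union). A partial operation of finite domain on $X$ is a map $A\to X$ with $A\subseteq X^n$ finite for some $n\ge1$. A partial clone of finite operations on $X$ is a set of partial operations of finite domain on $X$ containing all restrictions of projections to finite domains and closed under composition (where the composition $f(g_1,\dots,g_n)$ of partial operations is defined on those tuples where all $g_i$ are defined and $f$ is defined at the resulting tuple). The partial clones of finite operations on $X$, ordered by inclusion, form a complete lattice, whose join of a family is the smallest partial clone of finite operations containing its union. *)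

theory Defs
  imports "HOL-Library.Countable_Set"
begin

text \<open>The base set X is the universe of the type 'a. Tuples in X^n are lists of
length n. An n-ary operation is a pair (n, f) with n >= 1 and f :: 'a list => 'a,
where f is normalised to be undefined on lists whose length is not n.
A partial operation of finite domain is a pair (n, p) with n >= 1 and
p :: 'a list => 'a option whose domain is a finite set of lists of length n.\<close>

type_synonym 'a operation = "nat \<times> ('a list \<Rightarrow> 'a)"
type_synonym 'a poperation = "nat \<times> ('a list \<Rightarrow> 'a option)"

definition tuples :: "nat \<Rightarrow> 'a list set" where
  "tuples n = {xs. length xs = n}"

definition is_op :: "'a operation \<Rightarrow> bool" where
  "is_op F \<longleftrightarrow> fst F \<ge> 1 \<and> (\<forall>xs. length xs \<noteq> fst F \<longrightarrow> snd F xs = undefined)"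

definition proj :: "nat \<Rightarrow> nat \<Rightarrow> 'a operation" where
  "proj n k = (n, \<lambda>xs. if length xs = n then xs ! k else undefined)"

definition comp_op :: "('a list \<Rightarrow> 'a) \<Rightarrow> nat \<Rightarrow> ('a list \<Rightarrow> 'a) list \<Rightarrow> 'a operation" where
  "comp_op f m gs = (m, \<lambda>xs. if length xs = m then f (map (\<lambda>g. g xs) gs) else undefined)"

definition clone :: "'a operation set \<Rightarrow> bool" where
  "clone C \<longleftrightarrow> (\<forall>F\<in>C. is_op F)
     \<and> (\<forall>n k. 1 \<le> n \<and> k < n \<longrightarrow> proj n k \<in> C)
     \<and> (\<forall>n f m gs. (n, f) \<in> C \<and> m \<ge> 1 \<and> length gs = n \<and> (\<forall>g\<in>set gs. (m, g) \<in> C)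
            \<longrightarrow> comp_op f m gs \<in> C)"

definition local_clone :: "'a operation set \<Rightarrow> bool" where
  "local_clone C \<longleftrightarrow> clone C \<and>
     (\<forall>n g. is_op (n, g) \<and>
        (\<forall>B. finite B \<and> B \<subseteq> tuples n \<longrightarrow> (\<exists>f. (n, f) \<in> C \<and> (\<forall>xs\<in>B. f xs = g xs)))
        \<longrightarrow> (n, g) \<in> C)"

definition Cl_loc :: "'a operation set set" where
  "Cl_loc = {C. local_clone C}"

definition loc_join :: "'a operation set set \<Rightarrow> 'a operation set" where
  "loc_join S = \<Inter>{D. local_clone D \<and> \<Union>S \<subseteq> D}"

definition is_pop :: "'a poperation \<Rightarrow> bool" where
  "is_pop P \<longleftrightarrow> fst P \<ge> 1 \<and> dom (snd P) \<subseteq> tuples (fst P) \<and> finite (dom (snd P))"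

definition restr :: "('a list \<Rightarrow> 'a) \<Rightarrow> 'a list set \<Rightarrow> 'a list \<Rightarrow> 'a option" where
  "restr f A = (\<lambda>xs. if xs \<in> A then Some (f xs) else None)"

definition pcomp :: "('a list \<Rightarrow> 'a option) \<Rightarrow> nat \<Rightarrow> ('a list \<Rightarrow> 'a option) list \<Rightarrow> 'a poperation" where
  "pcomp p m gs = (m, \<lambda>xs. if length xs = m \<and> (\<forall>g\<in>set gs. g xs \<noteq> None)
                            then p (map (\<lambda>g. the (g xs)) gs) else None)"

definition partial_clone :: "'a poperation set \<Rightarrow> bool" where
  "partial_clone P \<longleftrightarrow> (\<forall>F\<in>P. is_pop F)
     \<and> (\<forall>n k A. 1 \<le> n \<and> k < n \<and> finite A \<and> A \<subseteq> tuples n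
            \<longrightarrow> (n, restr (\<lambda>xs. xs ! k) A) \<in> P)
     \<and> (\<forall>n p m gs. (n, p) \<in> P \<and> m \<ge> 1 \<and> length gs = n \<and> (\<forall>g\<in>set gs. (m, g) \<in> P)
            \<longrightarrow> pcomp p m gs \<in> P)"

definition pclone_join :: "'a poperation set set \<Rightarrow> 'a poperation set" where
  "pclone_join S = \<Inter>{P. partial_clone P \<and> \<Union>S \<subseteq> P}"

definition sigma :: "'a operation set \<Rightarrow> 'a poperation set" where
  "sigma C = {(n, restr f A) | n f A. (n, f) \<in> C \<and> finite A \<and> A \<subseteq> tuples n}"

end

theory Submission
  imports Defs
begin

text \<open>Let \<open>locally_in P\<close> be the set of operations all of whose finite
restrictions lie in the partial clone \<open>P\<close>. It is a local clone, and
\<open>sigma C \<subseteq> P \<longleftrightarrow> C \<subseteq> locally_in P\<close>; so \<open>sigma\<close> is the lower adjoint of a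
Galois connection and preserves all joins. Locality of \<open>C\<close> says precisely
that \<open>locally_in (sigma C) = C\<close>, which gives injectivity.\<close>

lemma dom_restr [simp]: "dom (restr f A) = A"
  by (auto simp: restr_def dom_def)

lemma restr_eq_iff: "restr f A = restr g B \<longleftrightarrow> A = B \<and> (\<forall>x\<in>A. f x = g x)"
proof
  assume eq: "restr f A = restr g B"
  then have "A = B" by (metis dom_restr)
  moreover have "f x = g x" if "x \<in> A" for x
    using fun_cong[OF eq, of x] that \<open>A = B\<close> by (simp add: restr_def)
  ultimately show "A = B \<and> (\<forall>x\<in>A. f x = g x)" by blast
qed (auto simp: restr_def)

lemma restr_proj:
  "B \<subseteq> tuples n \<Longrightarrow> restr (snd (proj n k)) B = restr (\<lambda>xs. xs ! k) B"
  by (auto simp: restr_eq_iff proj_def tuples_def)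

lemma pcomp_restr:
  "pcomp (restr f A) m (map (\<lambda>(h, B). restr h B) hBs) =
     (m, restr (snd (comp_op f m (map fst hBs)))
           {xs. length xs = m \<and> (\<forall>(h, B)\<in>set hBs. xs \<in> B) \<and> map (\<lambda>(h, B). h xs) hBs \<in> A})"
proof -
  have defined_iff: "(\<forall>g\<in>set (map (\<lambda>(h, B). restr h B) hBs). g xs \<noteq> None) \<longleftrightarrow>
      (\<forall>(h, B)\<in>set hBs. xs \<in> B)" for xs
    by (fastforce simp: restr_def split: if_splits)
  have inner_values: "map (\<lambda>g. the (g xs)) (map (\<lambda>(h, B). restr h B) hBs) = map (\<lambda>(h, B). h xs) hBs"
    if "\<forall>(h, B)\<in>set hBs. xs \<in> B" for xs
    using that by (auto simp: restr_def)
  have outer_values: "map (\<lambda>g. g xs) (map fst hBs) = map (\<lambda>(h, B). h xs) hBs" for xs :: "'a list"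
    by (simp add: case_prod_beta)
  show ?thesis
    unfolding pcomp_def comp_op_def defined_iff
    by (intro arg_cong[where f = "Pair m"] ext) (simp add: restr_def inner_values outer_values del: map_map)
qed

subsection \<open>Clones and local clones\<close>

lemma clone_is_op: "clone C \<Longrightarrow> F \<in> C \<Longrightarrow> is_op F"
  unfolding clone_def by (elim conjE) simp

lemma clone_arity_ge_1: "clone C \<Longrightarrow> (n, f) \<in> C \<Longrightarrow> 1 \<le> n"
  using clone_is_op by (fastforce simp: is_op_def)

lemma clone_proj: "clone C \<Longrightarrow> 1 \<le> n \<Longrightarrow> k < n \<Longrightarrow> proj n k \<in> C"
  unfolding clone_def by (elim conjE) simp

lemma clone_comp_op:
  "clone C \<Longrightarrow> (n, f) \<in> C \<Longrightarrow> 1 \<le> m \<Longrightarrow> length gs = n \<Longrightarrow> \<forall>g\<in>set gs. (m, g) \<in> C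
    \<Longrightarrow> comp_op f m gs \<in> C"
  unfolding clone_def by (elim conjE) simp

lemma local_clone_clone: "local_clone C \<Longrightarrow> clone C"
  unfolding local_clone_def by (elim conjE) simp

lemma local_cloneD:
  "local_clone C \<Longrightarrow> is_op (n, g) \<Longrightarrow>
    (\<And>B. finite B \<Longrightarrow> B \<subseteq> tuples n \<Longrightarrow> \<exists>f. (n, f) \<in> C \<and> (\<forall>xs\<in>B. f xs = g xs))
    \<Longrightarrow> (n, g) \<in> C"
  unfolding local_clone_def by (elim conjE) simp

lemma local_cloneI:
  assumes "\<And>F. F \<in> C \<Longrightarrow> is_op F"
    and "\<And>n k. 1 \<le> n \<Longrightarrow> k < n \<Longrightarrow> proj n k \<in> C"
    and "\<And>n f m gs. (n, f) \<in> C \<Longrightarrow> 1 \<le> m \<Longrightarrow> length gs = n \<Longrightarrow> \<forall>g\<in>set gs. (m, g) \<in> C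
           \<Longrightarrow> comp_op f m gs \<in> C"
    and "\<And>n g. is_op (n, g) \<Longrightarrow>
           \<forall>B. finite B \<and> B \<subseteq> tuples n \<longrightarrow> (\<exists>f. (n, f) \<in> C \<and> (\<forall>xs\<in>B. f xs = g xs))
           \<Longrightarrow> (n, g) \<in> C"
  shows "local_clone C"
  unfolding local_clone_def clone_def
  by (intro conjI ballI allI impI; (elim conjE)?) (simp_all add: assms)

lemma local_clone_all_ops: "local_clone {F. is_op F}"
  by (rule local_cloneI) (auto simp: is_op_def proj_def comp_op_def)

lemma local_clone_Inter:
  assumes "\<And>D. D \<in> Ds \<Longrightarrow> local_clone D" and "Ds \<noteq> {}"
  shows "local_clone (\<Inter>Ds)"
proof (rule local_cloneI)
  have clones: "\<And>D. D \<in> Ds \<Longrightarrow> clone D"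
    using assms(1) local_clone_clone by blast
  show "is_op F" if "F \<in> \<Inter>Ds" for F
    using that assms(2) clone_is_op[OF clones] by blast
  show "proj n k \<in> \<Inter>Ds" if "1 \<le> n" "k < n" for n k
    using that clone_proj[OF clones] by blast
  show "comp_op f m gs \<in> \<Inter>Ds"
    if "(n, f) \<in> \<Inter>Ds" "1 \<le> m" "length gs = n" "\<forall>g\<in>set gs. (m, g) \<in> \<Inter>Ds" for n f m gs
    using that clone_comp_op[OF clones] by blast
  show "(n, g) \<in> \<Inter>Ds"
    if "is_op (n, g)"
      and approx: "\<forall>B. finite B \<and> B \<subseteq> tuples n \<longrightarrow> (\<exists>f. (n, f) \<in> \<Inter>Ds \<and> (\<forall>xs\<in>B. f xs = g xs))"
    for n g
  proof
    fix D assume "D \<in> Ds"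
    with approx have "\<exists>f. (n, f) \<in> D \<and> (\<forall>xs\<in>B. f xs = g xs)" if "finite B" "B \<subseteq> tuples n" for B
      using that by blast
    with local_cloneD[OF assms(1)[OF \<open>D \<in> Ds\<close>] \<open>is_op (n, g)\<close>] show "(n, g) \<in> D" by blast
  qed
qed

lemma local_clone_loc_join:
  assumes "S \<subseteq> Cl_loc"
  shows "local_clone (loc_join S)"
proof -
  have "\<Union>S \<subseteq> {F. is_op F}"
    using assms clone_is_op local_clone_clone by (fastforce simp: Cl_loc_def)
  then show ?thesis
    unfolding loc_join_def using local_clone_all_ops by (intro local_clone_Inter) auto
qed

lemma loc_join_upper: "C \<in> S \<Longrightarrow> C \<subseteq> loc_join S"
  unfolding loc_join_def by blast

lemma loc_join_least: "local_clone D \<Longrightarrow> \<Union>S \<subseteq> D \<Longrightarrow> loc_join S \<subseteq> D"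
  unfolding loc_join_def by blast

subsection \<open>Partial clones\<close>

lemma partial_clone_is_pop: "partial_clone P \<Longrightarrow> F \<in> P \<Longrightarrow> is_pop F"
  unfolding partial_clone_def by (elim conjE) simp

lemma partial_clone_proj:
  "partial_clone P \<Longrightarrow> 1 \<le> n \<Longrightarrow> k < n \<Longrightarrow> finite A \<Longrightarrow> A \<subseteq> tuples n
    \<Longrightarrow> (n, restr (\<lambda>xs. xs ! k) A) \<in> P"
  unfolding partial_clone_def by (elim conjE) simp

lemma partial_clone_pcomp:
  "partial_clone P \<Longrightarrow> (n, p) \<in> P \<Longrightarrow> 1 \<le> m \<Longrightarrow> length gs = n \<Longrightarrow> \<forall>g\<in>set gs. (m, g) \<in> P
    \<Longrightarrow> pcomp p m gs \<in> P"
  unfolding partial_clone_def by (elim conjE) simp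

lemma partial_cloneI:
  assumes "\<And>F. F \<in> P \<Longrightarrow> is_pop F"
    and "\<And>n k A. 1 \<le> n \<Longrightarrow> k < n \<Longrightarrow> finite A \<Longrightarrow> A \<subseteq> tuples n \<Longrightarrow> (n, restr (\<lambda>xs. xs ! k) A) \<in> P"
    and "\<And>n p m gs. (n, p) \<in> P \<Longrightarrow> 1 \<le> m \<Longrightarrow> length gs = n \<Longrightarrow> \<forall>g\<in>set gs. (m, g) \<in> P
           \<Longrightarrow> pcomp p m gs \<in> P"
  shows "partial_clone P"
  unfolding partial_clone_def
  by (intro conjI ballI allI impI; (elim conjE)?) (simp_all add: assms)

lemma partial_clone_Inter:
  assumes "\<And>P. P \<in> Ps \<Longrightarrow> partial_clone P" and "Ps \<noteq> {}"
  shows "partial_clone (\<Inter>Ps)"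
proof (rule partial_cloneI)
  show "is_pop F" if "F \<in> \<Inter>Ps" for F
    using that assms(2) partial_clone_is_pop[OF assms(1)] by blast
  show "(n, restr (\<lambda>xs. xs ! k) A) \<in> \<Inter>Ps"
    if "1 \<le> n" "k < n" "finite A" "A \<subseteq> tuples n" for n k and A :: "'a list set"
    using that partial_clone_proj[OF assms(1)] by blast
  show "pcomp p m gs \<in> \<Inter>Ps"
    if "(n, p) \<in> \<Inter>Ps" "1 \<le> m" "length gs = n" "\<forall>g\<in>set gs. (m, g) \<in> \<Inter>Ps" for n p m gs
    using that partial_clone_pcomp[OF assms(1)] by blast
qed

lemma partial_clone_pclone_join:
  "partial_clone P \<Longrightarrow> \<Union>S \<subseteq> P \<Longrightarrow> partial_clone (pclone_join S)"
  unfolding pclone_join_def by (rule partial_clone_Inter) auto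

lemma pclone_join_upper: "P \<in> S \<Longrightarrow> P \<subseteq> pclone_join S"
  unfolding pclone_join_def by blast

lemma pclone_join_least: "partial_clone Q \<Longrightarrow> \<Union>S \<subseteq> Q \<Longrightarrow> pclone_join S \<subseteq> Q"
  unfolding pclone_join_def by blast

lemma mem_sigma_iff:
  "(n, p) \<in> sigma C \<longleftrightarrow> (\<exists>f A. (n, f) \<in> C \<and> finite A \<and> A \<subseteq> tuples n \<and> p = restr f A)"
  by (auto simp: sigma_def)

lemma sigma_mono: "C \<subseteq> D \<Longrightarrow> sigma C \<subseteq> sigma D"
  by (auto simp: sigma_def)

lemma partial_clone_sigma:
  assumes "clone C"
  shows "partial_clone (sigma C)"
proof (rule partial_cloneI)
  show "is_pop F" if F: "F \<in> sigma C" for F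
  proof -
    obtain n f A where "F = (n, restr f A)" "(n, f) \<in> C" "finite A" "A \<subseteq> tuples n"
      using F unfolding sigma_def by blast
    then show ?thesis
      using clone_arity_ge_1[OF assms] by (simp add: is_pop_def)
  qed
  show "(n, restr (\<lambda>xs. xs ! k) A) \<in> sigma C"
    if "1 \<le> n" "k < n" "finite A" "A \<subseteq> tuples n" for n k and A :: "'a list set"
  proof -
    have "(n, snd (proj n k)) \<in> C"
      using clone_proj[OF assms that(1,2)] by (simp add: proj_def)
    then show ?thesis
      using that restr_proj[OF that(4)] by (metis mem_sigma_iff)
  qed
  show "pcomp p m gs \<in> sigma C"
    if p: "(n, p) \<in> sigma C" and "1 \<le> m" "length gs = n" and gs: "\<forall>g\<in>set gs. (m, g) \<in> sigma C"
    for n p m gs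
  proof -
    obtain f A where f: "(n, f) \<in> C" "p = restr f A"
      using p by (auto simp: mem_sigma_iff)
    have "\<forall>g\<in>set gs. \<exists>hB. (m, fst hB) \<in> C \<and> finite (snd hB) \<and> g = restr (fst hB) (snd hB)"
      using gs by (fastforce simp: mem_sigma_iff)
    then obtain r where r: "\<And>g. g \<in> set gs \<Longrightarrow>
        (m, fst (r g)) \<in> C \<and> finite (snd (r g)) \<and> g = restr (fst (r g)) (snd (r g))"
      by (metis bchoice)
    define hBs where "hBs = map r gs"
    define D where "D = {xs. length xs = m \<and> (\<forall>(h, B)\<in>set hBs. xs \<in> B) \<and> map (\<lambda>(h, B). h xs) hBs \<in> A}"
    have gs_hBs: "gs = map (\<lambda>(h, B). restr h B) hBs"
      unfolding hBs_def using r by (induction gs) (auto simp: case_prod_beta)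
    have "comp_op f m (map fst hBs) \<in> C"
      using clone_comp_op[OF assms f(1) \<open>1 \<le> m\<close>] r \<open>length gs = n\<close> by (auto simp: hBs_def)
    then have h: "(m, snd (comp_op f m (map fst hBs))) \<in> C"
      by (simp add: comp_op_def)
    obtain g0 where "g0 \<in> set gs"
      using clone_arity_ge_1[OF assms f(1)] \<open>length gs = n\<close> by (cases gs) auto
    then have "D \<subseteq> snd (r g0)" "finite (snd (r g0))"
      using r by (auto simp: D_def hBs_def)
    then have "finite D" "D \<subseteq> tuples m"
      by (auto simp: D_def tuples_def intro: finite_subset)
    moreover have "pcomp p m gs = (m, restr (snd (comp_op f m (map fst hBs))) D)"
      unfolding f(2) gs_hBs pcomp_restr D_def ..
    ultimately show ?thesis
      using h by (auto simp: mem_sigma_iff)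
  qed
qed

subsection \<open>The operations that are locally in a partial clone\<close>

definition locally_in :: "'a poperation set \<Rightarrow> 'a operation set" where
  "locally_in P = {(n, g). is_op (n, g) \<and> (\<forall>B. finite B \<and> B \<subseteq> tuples n \<longrightarrow> (n, restr g B) \<in> P)}"

lemma mem_locally_in_iff:
  "(n, g) \<in> locally_in P \<longleftrightarrow> is_op (n, g) \<and> (\<forall>B. finite B \<and> B \<subseteq> tuples n \<longrightarrow> (n, restr g B) \<in> P)"
  by (simp add: locally_in_def)

lemma sigma_subset_iff:
  assumes "\<forall>F\<in>C. is_op F"
  shows "sigma C \<subseteq> P \<longleftrightarrow> C \<subseteq> locally_in P"
  using assms by (fastforce simp: sigma_def locally_in_def)

lemma locally_in_sigma:
  assumes "local_clone C"
  shows "locally_in (sigma C) = C"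
proof
  show "C \<subseteq> locally_in (sigma C)"
    using sigma_subset_iff clone_is_op local_clone_clone[OF assms] by blast
  show "locally_in (sigma C) \<subseteq> C"
  proof
    fix F assume F: "F \<in> locally_in (sigma C)"
    then obtain n g where "F = (n, g)" "is_op (n, g)"
      by (auto simp: locally_in_def)
    moreover have "\<exists>f. (n, f) \<in> C \<and> (\<forall>xs\<in>B. f xs = g xs)" if "finite B" "B \<subseteq> tuples n" for B
      using F that \<open>F = (n, g)\<close> by (fastforce simp: locally_in_def mem_sigma_iff restr_eq_iff)
    ultimately show "F \<in> C"
      using local_cloneD[OF assms] by blast
  qed
qed

lemma local_clone_locally_in:
  assumes "partial_clone P"
  shows "local_clone (locally_in P)"
proof (rule local_cloneI)
  show "is_op F" if "F \<in> locally_in P" for F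
    using that by (auto simp: locally_in_def)
  show "proj n k \<in> locally_in P" if "1 \<le> n" "k < n" for n k
  proof -
    have "(n, restr (snd (proj n k)) B) \<in> P" if "finite B" "B \<subseteq> tuples n" for B
      using restr_proj[OF that(2)] partial_clone_proj[OF assms \<open>1 \<le> n\<close> \<open>k < n\<close> that] by simp
    moreover have "is_op (proj n k :: 'a operation)"
      using that by (simp add: is_op_def proj_def)
    ultimately show ?thesis
      by (simp add: locally_in_def proj_def)
  qed
  show "comp_op f m gs \<in> locally_in P"
    if f: "(n, f) \<in> locally_in P" and "1 \<le> m" "length gs = n" and gs: "\<forall>g\<in>set gs. (m, g) \<in> locally_in P"
    for n f m gs
  proof -
    have "gs \<noteq> []"
      using f \<open>length gs = n\<close> by (auto simp: locally_in_def is_op_def)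
    obtain h where h: "comp_op f m gs = (m, h)"
      by (simp add: comp_op_def)
    have "(m, restr h B) \<in> P" if B: "finite B" "B \<subseteq> tuples m" for B
    proof -
      define A where "A = (\<lambda>xs. map (\<lambda>g. g xs) gs) ` B"
      have "finite A" "A \<subseteq> tuples n"
        using B \<open>length gs = n\<close> by (auto simp: A_def tuples_def)
      then have "(n, restr f A) \<in> P"
        using f by (simp add: locally_in_def)
      moreover have "\<forall>g\<in>set (map (\<lambda>g. restr g B) gs). (m, g) \<in> P"
        using gs B by (auto simp: locally_in_def)
      ultimately have "pcomp (restr f A) m (map (\<lambda>g. restr g B) gs) \<in> P"
        using partial_clone_pcomp[OF assms] \<open>1 \<le> m\<close> \<open>length gs = n\<close> by simp
      moreover have "pcomp (restr f A) m (map (\<lambda>g. restr g B) gs) = (m, restr h B)"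
      proof -
        define hBs where "hBs = map (\<lambda>g. (g, B)) gs"
        have "{xs. length xs = m \<and> (\<forall>(h, B)\<in>set hBs. xs \<in> B) \<and> map (\<lambda>(h, B). h xs) hBs \<in> A} = B"
          using B \<open>gs \<noteq> []\<close> by (auto simp: hBs_def A_def tuples_def neq_Nil_conv)
        moreover have "map (\<lambda>(h, B). restr h B) hBs = map (\<lambda>g. restr g B) gs" "map fst hBs = gs"
          by (simp_all add: hBs_def o_def)
        ultimately show ?thesis
          using pcomp_restr[of f A m hBs] h by simp
      qed
      ultimately show ?thesis by simp
    qed
    moreover have "is_op (comp_op f m gs)"
      using \<open>1 \<le> m\<close> by (simp add: is_op_def comp_op_def)
    ultimately show ?thesis
      unfolding h by (simp add: mem_locally_in_iff)
  qed
  show "(n, g) \<in> locally_in P"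
    if "is_op (n, g)"
      and approx: "\<forall>B. finite B \<and> B \<subseteq> tuples n \<longrightarrow> (\<exists>f. (n, f) \<in> locally_in P \<and> (\<forall>xs\<in>B. f xs = g xs))"
    for n g
  proof -
    have "(n, restr g B) \<in> P" if B: "finite B" "B \<subseteq> tuples n" for B
    proof -
      obtain f where "(n, f) \<in> locally_in P" "\<forall>xs\<in>B. f xs = g xs"
        using approx B by blast
      then have "restr g B = restr f B" "(n, restr f B) \<in> P"
        using B by (auto simp: mem_locally_in_iff restr_eq_iff)
      then show ?thesis by simp
    qed
    then show ?thesis
      using \<open>is_op (n, g)\<close> by (simp add: locally_in_def)
  qed
qed

lemma inj_on_sigma: "inj_on sigma Cl_loc"
  by (rule inj_on_inverseI[where g = locally_in]) (simp add: Cl_loc_def locally_in_sigma)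

lemma sigma_loc_join:
  assumes "S \<subseteq> Cl_loc"
  shows "sigma (loc_join S) = pclone_join (sigma ` S)"
proof
  have join_local: "local_clone (loc_join S)"
    using local_clone_loc_join[OF assms] .
  then have join_ops: "\<forall>F\<in>loc_join S. is_op F"
    using clone_is_op local_clone_clone by blast
  have sigma_join: "partial_clone (sigma (loc_join S))"
    using partial_clone_sigma local_clone_clone[OF join_local] by blast
  have upper: "\<Union>(sigma ` S) \<subseteq> sigma (loc_join S)"
    using loc_join_upper sigma_mono by blast
  then show "pclone_join (sigma ` S) \<subseteq> sigma (loc_join S)"
    using pclone_join_least[OF sigma_join] by blast
  have "C \<subseteq> locally_in (pclone_join (sigma ` S))" if "C \<in> S" for C
    using that loc_join_upper[OF that] join_ops pclone_join_upper[of "sigma C"]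
    by (metis imageI sigma_subset_iff subset_iff)
  then have "loc_join S \<subseteq> locally_in (pclone_join (sigma ` S))"
    using loc_join_least local_clone_locally_in partial_clone_pclone_join[OF sigma_join upper]
    by blast
  then show "sigma (loc_join S) \<subseteq> pclone_join (sigma ` S)"
    using sigma_subset_iff[OF join_ops] by blast
qed

theorem proposition2p8:
  assumes "countable (UNIV :: 'a set)" and "infinite (UNIV :: 'a set)"
  shows "(\<forall>C\<in>(Cl_loc :: 'a operation set set). partial_clone (sigma C))
       \<and> inj_on (sigma :: 'a operation set \<Rightarrow> 'a poperation set) Cl_loc
       \<and> (\<forall>S \<subseteq> (Cl_loc :: 'a operation set set). sigma (loc_join S) = pclone_join (sigma ` S))"
  using partial_clone_sigma local_clone_clone inj_on_sigma sigma_loc_join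
  by (auto simp: Cl_loc_def)

end
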